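(* Let $(K,\alpha_K)$ be a Hom-Leibniz $n$-algebra with ${}_nHL_0^\alpha(K)={}_nHL_1^\alpha(K)=0$. Then every central extension $0\to(M,\alpha_M)\to(K,\alpha_K)\xrightarrow{\pi}(L,\alpha_L)\to0$ is a universal central extension.
   Context: Fix a field $\mathbb K$ and $n\ge2$. A (multiplicative) Hom-Leibniz $n$-algebra is a $\mathbb K$-vector space $L$ with an $n$-linear bracket and a linear map $\alpha_L$ preserving the bracket, satisfying $[[x_1,\dots,x_n],\alpha_L(y_1),\dots,\alpha_L(y_{n-1})]=\sum_{i=1}^n[\alpha_L(x_1),\dots,[x_i,y_1,\dots,y_{n-1}],\dots,\alpha_L(x_n)]$. Homomorphisms preserve brackets and commute with twisting maps. Center $Z(K)$: elements $x$ with every bracket having $x$ in some position equal to $0$. An extension of $L$ is a surjective homomorphism $\pi:K\to L$ with kernel $M$; central if $M\subseteq Z(K)$; universal central if central and for every central extension $\pi':K'\to L$ there is a unique homomorphism $h:K\to K'$ with $\pi'\circ h=\pi$. Define $\delta_1:K^{\otimes n}\to K$, $\delta_1(x_1\otimes\dots\otimes x_n)=[x_1,\dots,x_n]$, and $\delta_2:K^{\otimes(2n-1)}\to K^{\otimes n}$, $\delta_2(x_1\otimes\dots\otimes x_n\otimes y_1\otimes\dots\otimes y_{n-1})=[x_1,\dots,x_n]\otimes\alpha_K(y_1)\otimes\dots\otimes\alpha_K(y_{n-1})-\sum_{i=1}^n\alpha_K(x_1)\otimes\dots\otimes[x_i,y_1,\dots,y_{n-1}]\otimes\dots\otimes\alpha_K(x_n)$.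 Then ${}_nHL_0^\alpha(K)=K/[K,\dots,K]$ and ${}_nHL_1^\alpha(K)=\ker\delta_1/\operatorname{im}\delta_2$. *)

theory Defs
  imports Complex_Main "HOL-Library.Function_Algebras"
begin

text \<open>A vector space is a whole type 'b with
 scalar multiplication sc (in the sense of the Main locale vector_space). The n-ary
 bracket is a function on lists; only its values on lists of length n matter.\<close>

definition nlinear :: "('k::field \<Rightarrow> 'b::ab_group_add \<Rightarrow> 'b) \<Rightarrow> nat \<Rightarrow> ('b list \<Rightarrow> 'b) \<Rightarrow> bool" where
  "nlinear sc n br \<longleftrightarrow>
     (\<forall>xs i a b. length xs = n \<longrightarrow> i < n \<longrightarrow>
        br (xs[i := a + b]) = br (xs[i := a]) + br (xs[i := b])) \<and>
     (\<forall>xs i c a. length xs = n \<longrightarrow> i < n \<longrightarrow>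
        br (xs[i := sc c a]) = sc c (br (xs[i := a])))"

definition hom_leibniz :: "('k::field \<Rightarrow> 'b::ab_group_add \<Rightarrow> 'b) \<Rightarrow> nat \<Rightarrow> ('b list \<Rightarrow> 'b) \<Rightarrow> ('b \<Rightarrow> 'b) \<Rightarrow> bool" where
  "hom_leibniz sc n br \<alpha> \<longleftrightarrow>
     vector_space sc \<and> nlinear sc n br \<and> Vector_Spaces.linear sc sc \<alpha> \<and>
     (\<forall>xs. length xs = n \<longrightarrow> \<alpha> (br xs) = br (map \<alpha> xs)) \<and>
     (\<forall>xs ys. length xs = n \<longrightarrow> length ys = n - 1 \<longrightarrow>
        br (br xs # map \<alpha> ys) =
        (\<Sum>i<n. br ((map \<alpha> xs)[i := br (xs ! i # ys)])))"

definition hl_hom :: "('k::field \<Rightarrow> 'b::ab_group_add \<Rightarrow> 'b) \<Rightarrow> ('b list \<Rightarrow> 'b) \<Rightarrow> ('b \<Rightarrow> 'b) \<Rightarrow>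
     ('k \<Rightarrow> 'c::ab_group_add \<Rightarrow> 'c) \<Rightarrow> ('c list \<Rightarrow> 'c) \<Rightarrow> ('c \<Rightarrow> 'c) \<Rightarrow> nat \<Rightarrow> ('b \<Rightarrow> 'c) \<Rightarrow> bool" where
  "hl_hom sK brK \<alpha>K sL brL \<alpha>L n f \<longleftrightarrow>
     Vector_Spaces.linear sK sL f \<and>
     (\<forall>xs. length xs = n \<longrightarrow> f (brK xs) = brL (map f xs)) \<and>
     (\<forall>x. f (\<alpha>K x) = \<alpha>L (f x))"

definition hl_center :: "nat \<Rightarrow> ('b::zero list \<Rightarrow> 'b) \<Rightarrow> 'b set" where
  "hl_center n br = {x. \<forall>xs i. length xs = n \<longrightarrow> i < n \<longrightarrow> br (xs[i := x]) = 0}"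

text \<open>Central extension pi : K -> L (with kernel M = ker pi).\<close>
definition central_ext where
  "central_ext sK brK \<alpha>K sL brL \<alpha>L n \<pi> \<longleftrightarrow>
     hom_leibniz sK n brK \<alpha>K \<and> hom_leibniz sL n brL \<alpha>L \<and>
     hl_hom sK brK \<alpha>K sL brL \<alpha>L n \<pi> \<and> surj \<pi> \<and>
     {x. \<pi> x = 0} \<subseteq> hl_center n brK"

text \<open>The type 'd is a parameter; universality is the conjunction over all types.\<close>
definition univ_central_ext_wrt ::
  "('k::field \<Rightarrow> 'b::ab_group_add \<Rightarrow> 'b) \<Rightarrow> ('b list \<Rightarrow> 'b) \<Rightarrow> ('b \<Rightarrow> 'b) \<Rightarrow>
   ('k \<Rightarrow> 'c::ab_group_add \<Rightarrow> 'c) \<Rightarrow> ('c list \<Rightarrow> 'c) \<Rightarrow> ('c \<Rightarrow> 'c) \<Rightarrow> nat \<Rightarrow> ('b \<Rightarrow> 'c) \<Rightarrow>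
   'd::ab_group_add itself \<Rightarrow> bool" where
  "univ_central_ext_wrt sK brK \<alpha>K sL brL \<alpha>L n \<pi> (_ :: 'd itself) \<longleftrightarrow>
     central_ext sK brK \<alpha>K sL brL \<alpha>L n \<pi> \<and>
     (\<forall>(sD :: 'k \<Rightarrow> 'd \<Rightarrow> 'd) brD \<alpha>D \<pi>'.
        central_ext sD brD \<alpha>D sL brL \<alpha>L n \<pi>' \<longrightarrow>
        (\<exists>!h. hl_hom sK brK \<alpha>K sD brD \<alpha>D n h \<and> \<pi>' \<circ> h = \<pi>))"

text \<open>The tensor power K^{(x)m} is realised concretely as the free vector space
 on lists of length m (finitely supported functions 'b list => 'k) modulo the subspace
 spanned by the multilinearity relations.\<close>

definition free_vs :: "nat \<Rightarrow> ('b list \<Rightarrow> 'k::field) set" where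
  "free_vs m = {f. finite {xs. f xs \<noteq> 0} \<and> (\<forall>xs. f xs \<noteq> 0 \<longrightarrow> length xs = m)}"

definition gen :: "'b list \<Rightarrow> ('b list \<Rightarrow> 'k::field)" where
  "gen xs = (\<lambda>ys. if ys = xs then 1 else 0)"

definition fscale :: "'k::field \<Rightarrow> ('b list \<Rightarrow> 'k) \<Rightarrow> ('b list \<Rightarrow> 'k)" where
  "fscale c f = (\<lambda>ys. c * f ys)"

definition tensor_rel :: "('k::field \<Rightarrow> 'b::ab_group_add \<Rightarrow> 'b) \<Rightarrow> nat \<Rightarrow> ('b list \<Rightarrow> 'k) set" where
  "tensor_rel sc m = module.span fscale
     ({gen (xs[i := a + b]) - gen (xs[i := a]) - gen (xs[i := b]) | xs i a b.
         length xs = m \<and> i < m} \<union>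
      {gen (xs[i := sc c a]) - fscale c (gen (xs[i := a])) | xs i c a.
         length xs = m \<and> i < m})"

definition delta1 :: "('k::field \<Rightarrow> 'b::ab_group_add \<Rightarrow> 'b) \<Rightarrow> ('b list \<Rightarrow> 'b) \<Rightarrow> ('b list \<Rightarrow> 'k) \<Rightarrow> 'b" where
  "delta1 sc br t = (\<Sum>xs\<in>{xs. t xs \<noteq> 0}. sc (t xs) (br xs))"

definition delta2_gen :: "nat \<Rightarrow> ('b list \<Rightarrow> 'b) \<Rightarrow> ('b \<Rightarrow> 'b) \<Rightarrow> 'b list \<Rightarrow> ('b list \<Rightarrow> 'k::field)" where
  "delta2_gen n br \<alpha> zs =
     (let xs = take n zs; ys = drop n zs in
      gen (br xs # map \<alpha> ys) - (\<Sum>i<n. gen ((map \<alpha> xs)[i := br (xs ! i # ys)])))"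

definition delta2 :: "nat \<Rightarrow> ('b list \<Rightarrow> 'b) \<Rightarrow> ('b \<Rightarrow> 'b) \<Rightarrow> ('b list \<Rightarrow> 'k::field) \<Rightarrow> ('b list \<Rightarrow> 'k)" where
  "delta2 n br \<alpha> s = (\<Sum>zs\<in>{zs. s zs \<noteq> 0}. fscale (s zs) (delta2_gen n br \<alpha> zs))"

text \<open>nHL_0(K) = K/[K,...,K] = 0\<close>
definition HL0_zero :: "('k::field \<Rightarrow> 'b::ab_group_add \<Rightarrow> 'b) \<Rightarrow> nat \<Rightarrow> ('b list \<Rightarrow> 'b) \<Rightarrow> bool" where
  "HL0_zero sc n br \<longleftrightarrow> module.span sc {br xs | xs. length xs = n} = UNIV"

text \<open>nHL_1(K) = ker delta_1 / im delta_2 = 0, on K^{(x)n} = free_vs n / tensor_rel n.\<close>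
definition HL1_zero :: "('k::field \<Rightarrow> 'b::ab_group_add \<Rightarrow> 'b) \<Rightarrow> nat \<Rightarrow> ('b list \<Rightarrow> 'b) \<Rightarrow> ('b \<Rightarrow> 'b) \<Rightarrow> bool" where
  "HL1_zero sc n br \<alpha> \<longleftrightarrow>
     (\<forall>t \<in> free_vs n. delta1 sc br t = 0 \<longrightarrow>
        (\<exists>s \<in> free_vs (2 * n - 1). t - delta2 n br \<alpha> s \<in> tensor_rel sc n))"

end

theory Submission
  imports Defs
begin

text \<open>Let \<open>p : D \<rightarrow> L\<close> be another central extension and \<open>t = s \<circ> \<pi>\<close> for a linear section \<open>s\<close>
  of \<open>p\<close>. Since central elements do not affect brackets, \<open>[t x\<^sub>1, \<dots>, t x\<^sub>n]\<close> depends only on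
  the \<open>\<pi> x\<^sub>i\<close>; hence \<open>x\<^sub>1 \<otimes> \<dots> \<otimes> x\<^sub>n \<mapsto> [t x\<^sub>1, \<dots>, t x\<^sub>n]\<close> is multilinear and satisfies the
  Hom-Leibniz identity, i.e. it kills \<open>im \<delta>\<^sub>2\<close>. As \<open>HL\<^sub>1(K) = 0\<close> it kills \<open>ker \<delta>\<^sub>1\<close>, so it
  factors through \<open>\<delta>\<^sub>1\<close>, which is onto because \<open>HL\<^sub>0(K) = 0\<close>; the factor is the required
  homomorphism. Two such homomorphisms induce the same brackets, again by centrality,
  so they agree on \<open>[K, \<dots>, K] = K\<close>.\<close>

definition fin_supp :: "('a \<Rightarrow> 'k::zero) \<Rightarrow> bool" where
  "fin_supp f \<longleftrightarrow> finite {x. f x \<noteq> 0}"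

definition free_ext :: "('k::field \<Rightarrow> 'd::ab_group_add \<Rightarrow> 'd) \<Rightarrow> ('a list \<Rightarrow> 'd) \<Rightarrow> ('a list \<Rightarrow> 'k) \<Rightarrow> 'd" where
  "free_ext sc g f = (\<Sum>xs\<in>{xs. f xs \<noteq> 0}. sc (f xs) (g xs))"

lemma delta1_eq_free_ext: "delta1 sc br = free_ext sc br"
  by (simp add: fun_eq_iff delta1_def free_ext_def)

subsection \<open>Finitely supported functions and their linear extension\<close>

lemma fin_supp_add:
  fixes f h :: "'a \<Rightarrow> 'k::ab_group_add"
  shows "fin_supp f \<Longrightarrow> fin_supp h \<Longrightarrow> fin_supp (f + h)"
  unfolding fin_supp_def by (rule finite_subset[of _ "{x. f x \<noteq> 0} \<union> {x. h x \<noteq> 0}"]) auto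

lemma fin_supp_diff:
  fixes f h :: "'a \<Rightarrow> 'k::ab_group_add"
  shows "fin_supp f \<Longrightarrow> fin_supp h \<Longrightarrow> fin_supp (f - h)"
  unfolding fin_supp_def by (rule finite_subset[of _ "{x. f x \<noteq> 0} \<union> {x. h x \<noteq> 0}"]) auto

lemma fin_supp_fscale:
  fixes f :: "'a list \<Rightarrow> 'k::field"
  shows "fin_supp f \<Longrightarrow> fin_supp (fscale c f)"
  unfolding fin_supp_def by (rule finite_subset[of _ "{x. f x \<noteq> 0}"]) (auto simp: fscale_def)

lemma fin_supp_gen: "fin_supp (gen xs :: _ \<Rightarrow> 'k::field)"
  unfolding fin_supp_def by (rule finite_subset[of _ "{xs}"]) (auto simp: gen_def)

lemma fin_supp_sum:
  fixes F :: "'i \<Rightarrow> 'a \<Rightarrow> 'k::field"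
  shows "(\<And>i. i \<in> I \<Longrightarrow> fin_supp (F i)) \<Longrightarrow> fin_supp (\<Sum>i\<in>I. F i)"
proof (induction I rule: infinite_finite_induct)
  case (insert i I)
  then show ?case unfolding sum.insert[OF insert.hyps] by (blast intro: fin_supp_add)
qed (simp_all add: fin_supp_def)

lemma fin_supp_zero: "fin_supp 0"
  by (simp add: fin_supp_def)

lemma module_fscale: "module (fscale :: 'k::field \<Rightarrow> ('a list \<Rightarrow> 'k) \<Rightarrow> _)"
  by unfold_locales (auto simp: fscale_def fun_eq_iff algebra_simps)

lemma free_vs_iff: "f \<in> free_vs m \<longleftrightarrow> fin_supp f \<and> (\<forall>xs. f xs \<noteq> 0 \<longrightarrow> length xs = m)"
  by (simp add: free_vs_def fin_supp_def)

lemma free_vs_add: "f \<in> free_vs m \<Longrightarrow> h \<in> free_vs m \<Longrightarrow> f + h \<in> free_vs m"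
  using fin_supp_add[of f h] unfolding free_vs_iff by (metis add.right_neutral plus_fun_apply)

lemma free_vs_diff: "f \<in> free_vs m \<Longrightarrow> h \<in> free_vs m \<Longrightarrow> f - h \<in> free_vs m"
  using fin_supp_diff[of f h] unfolding free_vs_iff by (metis diff_self minus_apply)

lemma free_vs_fscale: "f \<in> free_vs m \<Longrightarrow> fscale c f \<in> free_vs m"
  using fin_supp_fscale[of f c] by (auto simp: free_vs_iff fscale_def)

lemma free_vs_gen: "length xs = m \<Longrightarrow> (gen xs :: _ \<Rightarrow> 'k::field) \<in> free_vs m"
  using fin_supp_gen[of xs] by (auto simp: free_vs_iff gen_def)

lemma free_vs_zero: "0 \<in> free_vs m"
  by (simp add: free_vs_iff fin_supp_zero)

lemma free_ext_eq_sum_superset: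
  assumes "vector_space sc" "finite A" "{xs. f xs \<noteq> 0} \<subseteq> A"
  shows "free_ext sc g f = (\<Sum>xs\<in>A. sc (f xs) (g xs))"
proof -
  interpret vector_space sc by fact
  show ?thesis unfolding free_ext_def
    by (rule sum.mono_neutral_left) (use assms in auto)
qed

lemma free_ext_add:
  assumes vs: "vector_space sc" and "fin_supp f" "fin_supp h"
  shows "free_ext sc g (f + h) = free_ext sc g f + free_ext sc g h"
proof -
  interpret vector_space sc by fact
  let ?A = "{xs. f xs \<noteq> 0} \<union> {xs. h xs \<noteq> 0}"
  have A: "finite ?A" using assms by (simp add: fin_supp_def)
  have "free_ext sc g (f + h) = (\<Sum>xs\<in>?A. sc (f xs) (g xs)) + (\<Sum>xs\<in>?A. sc (h xs) (g xs))"
    by (subst free_ext_eq_sum_superset[OF vs A]) (auto simp: scale_left_distrib sum.distrib)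
  then show ?thesis
    by (simp add: free_ext_eq_sum_superset[OF vs A, of f] free_ext_eq_sum_superset[OF vs A, of h])
qed

lemma free_ext_scale:
  assumes vs: "vector_space sc" and f: "fin_supp f"
  shows "free_ext sc g (fscale c f) = sc c (free_ext sc g f)"
proof -
  interpret vector_space sc by fact
  have "free_ext sc g (fscale c f) = (\<Sum>xs\<in>{xs. f xs \<noteq> 0}. sc (c * f xs) (g xs))"
    using free_ext_eq_sum_superset[OF vs f[unfolded fin_supp_def], of "fscale c f" g] by (auto simp: fscale_def)
  then show ?thesis by (simp add: free_ext_def scale_sum_right)
qed

lemma free_ext_diff:
  assumes vs: "vector_space sc" and f: "fin_supp f" and h: "fin_supp h"
  shows "free_ext sc g (f - h) = free_ext sc g f - free_ext sc g h"
proof -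
  have "free_ext sc g f = free_ext sc g ((f - h) + h)" by simp
  also have "\<dots> = free_ext sc g (f - h) + free_ext sc g h"
    by (rule free_ext_add[OF vs fin_supp_diff[OF f h] h])
  finally show ?thesis by (simp add: algebra_simps)
qed

lemma free_ext_zero: "free_ext sc g 0 = 0"
  by (simp add: free_ext_def)

lemma free_ext_gen:
  assumes "vector_space sc"
  shows "free_ext sc g (gen xs :: _ \<Rightarrow> 'k::field) = g xs"
proof -
  interpret vector_space sc by fact
  have "{ys. (gen xs :: _ \<Rightarrow> 'k) ys \<noteq> 0} = {xs}" by (auto simp: gen_def)
  then show ?thesis by (simp add: free_ext_def gen_def)
qed

lemma free_ext_sum:
  fixes F :: "'i \<Rightarrow> 'a list \<Rightarrow> 'k::field"
  assumes vs: "vector_space sc" and "\<And>i. i \<in> I \<Longrightarrow> fin_supp (F i)"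
  shows "free_ext sc g (\<Sum>i\<in>I. F i) = (\<Sum>i\<in>I. free_ext sc g (F i))"
  using assms(2)
proof (induction I rule: infinite_finite_induct)
  case (insert i I)
  have "free_ext sc g (F i + sum F I) = free_ext sc g (F i) + free_ext sc g (sum F I)"
    by (rule free_ext_add[OF vs]) (use insert.prems in \<open>auto intro: fin_supp_sum\<close>)
  then show ?case using insert.IH insert.prems by (simp only: sum.insert[OF insert.hyps]) simp
qed (simp_all add: free_ext_zero)

lemma free_ext_cong: "(\<And>xs. f xs \<noteq> 0 \<Longrightarrow> g1 xs = g2 xs) \<Longrightarrow> free_ext sc g1 f = free_ext sc g2 f"
  unfolding free_ext_def by (rule sum.cong) auto

lemma linear_free_ext:
  assumes "Vector_Spaces.linear s1 s2 p"
  shows "p (free_ext s1 g f) = free_ext s2 (p \<circ> g) f"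
proof -
  interpret Vector_Spaces.linear s1 s2 p by fact
  show ?thesis by (simp add: free_ext_def sum scale)
qed

lemma free_ext_factor:
  fixes sK :: "'k::field \<Rightarrow> 'b::ab_group_add \<Rightarrow> 'b" and sD :: "'k \<Rightarrow> 'd::ab_group_add \<Rightarrow> 'd"
  assumes vsK: "vector_space sK" and vsD: "vector_space sD"
    and onto: "\<And>y. \<exists>\<tau>\<in>free_vs n. free_ext sK g\<^sub>1 \<tau> = y"
    and ker: "\<And>\<tau>. \<tau> \<in> free_vs n \<Longrightarrow> free_ext sK g\<^sub>1 \<tau> = 0 \<Longrightarrow> free_ext sD g \<tau> = 0"
  obtains h where "Vector_Spaces.linear sK sD h"
    and "\<And>\<tau>. \<tau> \<in> free_vs n \<Longrightarrow> h (free_ext sK g\<^sub>1 \<tau>) = free_ext sD g \<tau>"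
proof
  define h where "h y = free_ext sD g (SOME \<tau>. \<tau> \<in> free_vs n \<and> free_ext sK g\<^sub>1 \<tau> = y)" for y
  show h: "h (free_ext sK g\<^sub>1 \<tau>) = free_ext sD g \<tau>" if \<tau>: "\<tau> \<in> free_vs n" for \<tau>
  proof -
    define \<sigma> where "\<sigma> = (SOME \<sigma>. \<sigma> \<in> free_vs n \<and> free_ext sK g\<^sub>1 \<sigma> = free_ext sK g\<^sub>1 \<tau>)"
    have \<sigma>: "\<sigma> \<in> free_vs n" "free_ext sK g\<^sub>1 \<sigma> = free_ext sK g\<^sub>1 \<tau>"
      using someI[of "\<lambda>\<sigma>. \<sigma> \<in> free_vs n \<and> free_ext sK g\<^sub>1 \<sigma> = free_ext sK g\<^sub>1 \<tau>"] \<tau>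
      unfolding \<sigma>_def by blast+
    have fin: "fin_supp \<sigma>" "fin_supp \<tau>" using \<sigma> \<tau> by (auto simp: free_vs_iff)
    have "free_ext sD g (\<sigma> - \<tau>) = 0"
      using ker[OF free_vs_diff[OF \<sigma>(1) \<tau>]] free_ext_diff[OF vsK fin] \<sigma>(2) by simp
    then show ?thesis using free_ext_diff[OF vsD fin] by (simp add: h_def \<sigma>_def[symmetric])
  qed
  show "Vector_Spaces.linear sK sD h"
    unfolding Vector_Spaces.linear_iff
  proof (intro conjI allI)
    fix x y
    obtain \<tau>\<^sub>1 \<tau>\<^sub>2 where \<tau>: "\<tau>\<^sub>1 \<in> free_vs n" "\<tau>\<^sub>2 \<in> free_vs n"
      and x: "x = free_ext sK g\<^sub>1 \<tau>\<^sub>1" and y: "y = free_ext sK g\<^sub>1 \<tau>\<^sub>2"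
      using onto by metis
    have fin: "fin_supp \<tau>\<^sub>1" "fin_supp \<tau>\<^sub>2" using \<tau> by (auto simp: free_vs_iff)
    show "h (x + y) = h x + h y"
      using h[OF free_vs_add[OF \<tau>]] h[OF \<tau>(1)] h[OF \<tau>(2)]
      by (simp add: x y free_ext_add[OF vsK fin, symmetric] free_ext_add[OF vsD fin])
  next
    fix c x
    obtain \<tau> where \<tau>: "\<tau> \<in> free_vs n" and x: "x = free_ext sK g\<^sub>1 \<tau>"
      using onto by metis
    have fin: "fin_supp \<tau>" using \<tau> by (auto simp: free_vs_iff)
    show "h (sK c x) = sD c (h x)"
      using h[OF free_vs_fscale[OF \<tau>]] h[OF \<tau>]
      by (simp add: x free_ext_scale[OF vsK fin, symmetric] free_ext_scale[OF vsD fin])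
  qed (use vsK vsD in auto)
qed

subsection \<open>Maps killing the multilinearity relations and the image of \<open>\<delta>\<^sub>2\<close>\<close>

lemma tensor_rel_free_ext:
  fixes g :: "'b::ab_group_add list \<Rightarrow> 'd::ab_group_add" and sK :: "'k::field \<Rightarrow> 'b \<Rightarrow> 'b"
  assumes vs: "vector_space sD"
    and g_add: "\<And>xs i a b. length xs = n \<Longrightarrow> i < n \<Longrightarrow>
      g (xs[i := a + b]) = g (xs[i := a]) + g (xs[i := b])"
    and g_scale: "\<And>xs i c a. length xs = n \<Longrightarrow> i < n \<Longrightarrow>
      g (xs[i := sK c a]) = sD c (g (xs[i := a]))"
    and f: "f \<in> tensor_rel sK n"
  shows "fin_supp f \<and> free_ext sD g f = 0"
proof -
  interpret M: module "fscale :: 'k \<Rightarrow> ('b list \<Rightarrow> 'k) \<Rightarrow> _" by (rule module_fscale)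
  interpret vector_space sD by fact
  let ?Z = "{f. fin_supp f \<and> free_ext sD g f = 0}"
  have "M.subspace ?Z"
  proof (rule M.subspaceI)
    fix x y assume "x \<in> ?Z" "y \<in> ?Z"
    then show "x + y \<in> ?Z" using free_ext_add[OF vs, of x y g] fin_supp_add[of x y] by simp
  next
    fix c x assume "x \<in> ?Z"
    then show "fscale c x \<in> ?Z" using free_ext_scale[OF vs, of x g c] fin_supp_fscale[of x c] by simp
  qed (simp add: free_ext_zero fin_supp_zero)
  moreover have "x \<in> ?Z"
    if "x \<in> {gen (xs[i := a + b]) - gen (xs[i := a]) - gen (xs[i := b]) | xs i a b.
        length xs = n \<and> i < n}" for x
    using that
    by (auto simp: fin_supp_gen fin_supp_diff free_ext_diff[OF vs] free_ext_gen[OF vs] g_add)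
  moreover have "x \<in> ?Z"
    if "x \<in> {gen (xs[i := sK c a]) - fscale c (gen (xs[i := a])) | xs i c a.
        length xs = n \<and> i < n}" for x
    using that
    by (auto simp: fin_supp_gen fin_supp_fscale fin_supp_diff free_ext_diff[OF vs]
        free_ext_scale[OF vs] free_ext_gen[OF vs] g_scale)
  ultimately have "tensor_rel sK n \<subseteq> ?Z"
    unfolding tensor_rel_def by (intro M.span_minimal) blast+
  with f show ?thesis by blast
qed

lemma fin_supp_delta2_gen: "fin_supp (delta2_gen n br \<alpha> zs :: 'b list \<Rightarrow> 'k::field)"
  unfolding delta2_gen_def Let_def by (intro fin_supp_diff fin_supp_gen fin_supp_sum)

lemma fin_supp_delta2: "fin_supp (delta2 n br \<alpha> s :: 'b list \<Rightarrow> 'k::field)"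
  unfolding delta2_def by (intro fin_supp_sum fin_supp_fscale fin_supp_delta2_gen)

lemma free_ext_delta2:
  fixes g :: "'b::ab_group_add list \<Rightarrow> 'd::ab_group_add" and sD :: "'k::field \<Rightarrow> 'd \<Rightarrow> 'd"
  assumes vs: "vector_space sD"
    and leibniz: "\<And>xs ys. length xs = n \<Longrightarrow> length ys = n - 1 \<Longrightarrow>
      g (br xs # map \<alpha> ys) = (\<Sum>i<n. g ((map \<alpha> xs)[i := br (xs ! i # ys)]))"
    and s: "s \<in> free_vs (2 * n - 1)"
  shows "free_ext sD g (delta2 n br \<alpha> s :: 'b list \<Rightarrow> 'k) = 0"
proof -
  interpret vector_space sD by fact
  have gen: "free_ext sD g (delta2_gen n br \<alpha> zs :: 'b list \<Rightarrow> 'k) = 0"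
    if "length zs = 2 * n - 1" for zs
    using leibniz[of "take n zs" "drop n zs"] that
    unfolding delta2_gen_def Let_def
    by (simp add: free_ext_diff[OF vs] free_ext_sum[OF vs] free_ext_gen[OF vs]
        fin_supp_gen fin_supp_sum)
  have "free_ext sD g (delta2 n br \<alpha> s :: 'b list \<Rightarrow> 'k) =
    (\<Sum>zs\<in>{zs. s zs \<noteq> 0}. sD (s zs) (free_ext sD g (delta2_gen n br \<alpha> zs :: 'b list \<Rightarrow> 'k)))"
    unfolding delta2_def
    by (simp add: free_ext_sum[OF vs] free_ext_scale[OF vs] fin_supp_fscale fin_supp_delta2_gen)
  also have "\<dots> = 0"
    using s by (intro sum.neutral) (simp add: free_vs_iff gen)
  finally show ?thesis .
qed

subsection \<open>Brackets in a central extension\<close>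

lemma central_ext_bracket_eq:
  assumes "central_ext sD brD \<alpha>D sL brL \<alpha>L n p"
    and len: "length us = n" and eq: "map p us = map p vs"
  shows "brD us = brD vs"
proof -
  have nl: "nlinear sD n brD" and lp: "Vector_Spaces.linear sD sL p"
    and ker: "{x. p x = 0} \<subseteq> hl_center n brD"
    using assms(1) by (auto simp: central_ext_def hom_leibniz_def hl_hom_def)
  interpret L: Vector_Spaces.linear sD sL p by fact
  have lv: "length vs = n" using len eq by (metis length_map)
  define mix where "mix k = map (\<lambda>i. if i < k then vs ! i else us ! i) [0..<n]" for k
  have len_mix: "length (mix k) = n" for k by (simp add: mix_def)
  \<comment> \<open>replacing \<open>us ! k\<close> by \<open>vs ! k\<close> changes the bracket by a bracket with the central entry \<open>us ! k - vs ! k\<close>\<close>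
  have step: "brD (mix k) = brD (mix (Suc k))" if k: "k < n" for k
  proof -
    have "p (us ! k) = p (vs ! k)" using eq k len lv by (metis nth_map)
    then have central: "us ! k - vs ! k \<in> hl_center n brD" using ker L.diff by auto
    have split: "mix k = (mix (Suc k))[k := vs ! k + (us ! k - vs ! k)]"
      by (rule nth_equalityI) (auto simp: mix_def nth_list_update k)
    have same: "(mix (Suc k))[k := vs ! k] = mix (Suc k)"
      by (rule nth_equalityI) (auto simp: mix_def nth_list_update k)
    have "brD (mix k) = brD ((mix (Suc k))[k := vs ! k]) + brD ((mix (Suc k))[k := us ! k - vs ! k])"
      unfolding split using nl len_mix k unfolding nlinear_def by blast
    also have "brD ((mix (Suc k))[k := us ! k - vs ! k]) = 0"
      using central len_mix k unfolding hl_center_def by blast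
    finally show ?thesis by (simp add: same)
  qed
  have "brD us = brD (mix k)" if "k \<le> n" for k
    using that
  proof (induction k)
    case 0
    have "mix 0 = us" by (rule nth_equalityI) (auto simp: mix_def len)
    then show ?case by simp
  next
    case (Suc k)
    then show ?case using step[of k] by simp
  qed
  moreover have "mix n = vs" by (rule nth_equalityI) (auto simp: mix_def lv)
  ultimately show ?thesis by auto
qed

lemma bracket_maps_into_central_ext_eq:
  assumes vsK: "vector_space sK" and perfect: "HL0_zero sK n brK"
    and cD: "central_ext sD brD \<alpha>D sL brL \<alpha>L n p"
    and lin: "Vector_Spaces.linear sK sD f\<^sub>1" "Vector_Spaces.linear sK sD f\<^sub>2"
    and br1: "\<And>xs. length xs = n \<Longrightarrow> f\<^sub>1 (brK xs) = brD (map f\<^sub>1 xs)"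
    and br2: "\<And>xs. length xs = n \<Longrightarrow> f\<^sub>2 (brK xs) = brD (map f\<^sub>2 xs)"
    and eq: "p \<circ> f\<^sub>1 = p \<circ> f\<^sub>2"
  shows "f\<^sub>1 = f\<^sub>2"
proof
  fix x
  have "vector_space sD" using cD by (simp add: central_ext_def hom_leibniz_def)
  then interpret vector_space_pair sK sD by (simp add: vector_space_pair_def vsK)
  have "f\<^sub>1 y = f\<^sub>2 y" if bracket: "y \<in> {brK xs | xs. length xs = n}" for y
  proof -
    obtain xs where y: "y = brK xs" and xs: "length xs = n" using bracket by blast
    have "map p (map f\<^sub>1 xs) = map p (map f\<^sub>2 xs)"
      using eq by (simp add: map_map)
    then have "brD (map f\<^sub>1 xs) = brD (map f\<^sub>2 xs)"
      using xs by (intro central_ext_bracket_eq[OF cD]) simp_all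
    then show ?thesis by (simp add: y br1 br2 xs)
  qed
  moreover have "x \<in> vs1.span {brK xs | xs. length xs = n}"
    using perfect by (simp add: HL0_zero_def)
  ultimately show "f\<^sub>1 x = f\<^sub>2 x" using linear_eq_on_span[OF lin] by blast
qed

lemma lift_bracket_leibniz:
  assumes cK: "central_ext sK brK \<alpha>K sL brL \<alpha>L n \<pi>"
    and cD: "central_ext sD brD \<alpha>D sL brL \<alpha>L n p"
    and lift: "\<And>x. p (t x) = \<pi> x" and n: "n \<ge> 1"
    and lx: "length xs = n" and ly: "length ys = n - 1"
  shows "brD (map t (brK xs # map \<alpha>K ys)) =
    (\<Sum>i<n. brD (map t ((map \<alpha>K xs)[i := brK (xs ! i # ys)])))"
proof -
  have \<pi>br: "\<And>xs. length xs = n \<Longrightarrow> \<pi> (brK xs) = brL (map \<pi> xs)"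
    and \<pi>\<alpha>: "\<And>x. \<pi> (\<alpha>K x) = \<alpha>L (\<pi> x)"
    and pbr: "\<And>xs. length xs = n \<Longrightarrow> p (brD xs) = brL (map p xs)"
    and p\<alpha>: "\<And>x. p (\<alpha>D x) = \<alpha>L (p x)"
    and leibnizD: "\<And>xs ys. length xs = n \<Longrightarrow> length ys = n - 1 \<Longrightarrow>
      brD (brD xs # map \<alpha>D ys) = (\<Sum>i<n. brD ((map \<alpha>D xs)[i := brD (xs ! i # ys)]))"
    using cK cD by (auto simp: central_ext_def hl_hom_def hom_leibniz_def)
  have len_cons: "length (x # ys) = n" for x using ly n by simp
  have br_lift: "p (brD (map t (x # ys))) = \<pi> (brK (x # ys))" for x
    using pbr[of "map t (x # ys)"] \<pi>br[OF len_cons] len_cons by (simp only: length_map map_map lift o_def)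
  have "brD (map t (brK xs # map \<alpha>K ys)) = brD (brD (map t xs) # map \<alpha>D (map t ys))"
  proof (rule central_ext_bracket_eq[OF cD])
    show "map p (map t (brK xs # map \<alpha>K ys)) = map p (brD (map t xs) # map \<alpha>D (map t ys))"
      using lx by (simp add: lift \<pi>br pbr \<pi>\<alpha> p\<alpha> o_def)
  qed (use ly n in simp)
  also have "\<dots> = (\<Sum>i<n. brD ((map \<alpha>D (map t xs))[i := brD (map t xs ! i # map t ys)]))"
    by (rule leibnizD) (use lx ly in simp_all)
  also have "\<dots> = (\<Sum>i<n. brD (map t ((map \<alpha>K xs)[i := brK (xs ! i # ys)])))"
  proof (rule sum.cong[OF refl], rule central_ext_bracket_eq[OF cD])
    fix i assume "i \<in> {..<n}"
    then have "map t xs ! i # map t ys = map t (xs ! i # ys)" using lx by simp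
    then show "map p ((map \<alpha>D (map t xs))[i := brD (map t xs ! i # map t ys)]) =
      map p (map t ((map \<alpha>K xs)[i := brK (xs ! i # ys)]))"
      by (simp only: map_update map_map br_lift) (simp add: lift \<pi>\<alpha> p\<alpha> o_def)
  qed (use lx in simp)
  finally show ?thesis .
qed

subsection \<open>Existence of the comparison homomorphism\<close>

lemma HL0_zero_free_ext_onto:
  fixes sK :: "'k::field \<Rightarrow> 'b::ab_group_add \<Rightarrow> 'b"
  assumes vs: "vector_space sK" and "HL0_zero sK n brK"
  shows "\<exists>\<tau>\<in>free_vs n. free_ext sK brK \<tau> = y"
proof -
  interpret vector_space sK by fact
  let ?R = "{y. \<exists>\<tau>\<in>free_vs n. free_ext sK brK \<tau> = y}"
  have "subspace ?R"
  proof (rule subspaceI)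
    show "0 \<in> ?R" using free_vs_zero free_ext_zero by blast
  next
    fix x y assume "x \<in> ?R" "y \<in> ?R"
    then obtain \<tau> \<tau>' where "\<tau> \<in> free_vs n" "\<tau>' \<in> free_vs n"
      and "x = free_ext sK brK \<tau>" "y = free_ext sK brK \<tau>'" by blast
    then show "x + y \<in> ?R"
      using free_ext_add[OF vs, of \<tau> \<tau>' brK] free_vs_add[of \<tau> n \<tau>'] by (auto simp: free_vs_iff)
  next
    fix c x assume "x \<in> ?R"
    then obtain \<tau> where "\<tau> \<in> free_vs n" "x = free_ext sK brK \<tau>" by blast
    then show "sK c x \<in> ?R"
      using free_ext_scale[OF vs, of \<tau> brK c] free_vs_fscale[of \<tau> n c] by (auto simp: free_vs_iff)
  qed
  moreover have "{brK xs | xs. length xs = n} \<subseteq> ?R"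
    using free_vs_gen free_ext_gen[OF vs, of brK] by fastforce
  ultimately have "span {brK xs | xs. length xs = n} \<subseteq> ?R"
    by (intro span_minimal)
  then show ?thesis
    using assms(2) by (auto simp: HL0_zero_def)
qed

lemma central_ext_linear_lift:
  assumes cK: "central_ext sK brK \<alpha>K sL brL \<alpha>L n \<pi>"
    and cD: "central_ext sD brD \<alpha>D sL brL \<alpha>L n p"
  obtains t where "Vector_Spaces.linear sK sD t" and "\<And>x. p (t x) = \<pi> x"
proof -
  have vsL: "vector_space sL" and vsD: "vector_space sD"
    and l\<pi>: "Vector_Spaces.linear sK sL \<pi>" and lp: "Vector_Spaces.linear sD sL p" and "surj p"
    using cK cD by (auto simp: central_ext_def hom_leibniz_def hl_hom_def)
  obtain s where ls: "Vector_Spaces.linear sL sD s" and ps: "p \<circ> s = id"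
    using vector_space_pair.linear_surjective_right_inverse[of sD sL p] vsD vsL lp \<open>surj p\<close>
    by (auto simp: vector_space_pair_def)
  show thesis
  proof
    show "Vector_Spaces.linear sK sD (s \<circ> \<pi>)"
      using Vector_Spaces.linear_compose[OF l\<pi> ls] .
    show "p ((s \<circ> \<pi>) x) = \<pi> x" for x
      using ps by (simp add: pointfree_idE)
  qed
qed

lemma HL1_zero_lift_bracket_vanishes:
  fixes sK :: "'k::field \<Rightarrow> 'b::ab_group_add \<Rightarrow> 'b" and t :: "'b \<Rightarrow> 'd::ab_group_add"
  assumes n: "n \<ge> 1" and H1: "HL1_zero sK n brK \<alpha>K"
    and cK: "central_ext sK brK \<alpha>K sL brL \<alpha>L n \<pi>"
    and cD: "central_ext sD brD \<alpha>D sL brL \<alpha>L n p"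
    and lt: "Vector_Spaces.linear sK sD t" and lift: "\<And>x. p (t x) = \<pi> x"
    and \<tau>: "\<tau> \<in> free_vs n" and cycle: "free_ext sK brK \<tau> = 0"
  shows "free_ext sD (brD \<circ> map t) \<tau> = 0"
proof -
  interpret T: Vector_Spaces.linear sK sD t by fact
  have vsD: "vector_space sD" and nlD: "nlinear sD n brD"
    using cD by (auto simp: central_ext_def hom_leibniz_def)
  obtain \<sigma> where \<sigma>: "\<sigma> \<in> free_vs (2 * n - 1)"
    and rel: "\<tau> - delta2 n brK \<alpha>K \<sigma> \<in> tensor_rel sK n"
    using H1 \<tau> cycle unfolding HL1_zero_def delta1_eq_free_ext by blast
  have "free_ext sD (brD \<circ> map t) (\<tau> - delta2 n brK \<alpha>K \<sigma>) = 0"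
  proof (rule conjunct2[OF tensor_rel_free_ext[OF vsD _ _ rel]])
    fix xs :: "'b list" and i a b assume "length xs = n" "i < n"
    then show "(brD \<circ> map t) (xs[i := a + b]) =
      (brD \<circ> map t) (xs[i := a]) + (brD \<circ> map t) (xs[i := b])"
      using nlD by (simp add: nlinear_def map_update T.add)
  next
    fix xs :: "'b list" and i c a assume "length xs = n" "i < n"
    then show "(brD \<circ> map t) (xs[i := sK c a]) = sD c ((brD \<circ> map t) (xs[i := a]))"
      using nlD by (simp add: nlinear_def map_update T.scale)
  qed
  moreover have "free_ext sD (brD \<circ> map t) (delta2 n brK \<alpha>K \<sigma>) = 0"
    using free_ext_delta2[OF vsD _ \<sigma>] lift_bracket_leibniz[OF cK cD lift n] by simp
  moreover have "fin_supp \<tau>" using \<tau> by (simp add: free_vs_iff)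
  ultimately show ?thesis
    using free_ext_diff[OF vsD _ fin_supp_delta2, of \<tau> "brD \<circ> map t"] by simp
qed

lemma central_ext_lift_exists:
  fixes sK :: "'k::field \<Rightarrow> 'b::ab_group_add \<Rightarrow> 'b" and sD :: "'k \<Rightarrow> 'd::ab_group_add \<Rightarrow> 'd"
  assumes n: "n \<ge> 1" and perfect: "HL0_zero sK n brK" and H1: "HL1_zero sK n brK \<alpha>K"
    and cK: "central_ext sK brK \<alpha>K sL brL \<alpha>L n \<pi>"
    and cD: "central_ext sD brD \<alpha>D sL brL \<alpha>L n p"
  shows "\<exists>h. hl_hom sK brK \<alpha>K sD brD \<alpha>D n h \<and> p \<circ> h = \<pi>"
proof -
  have vsK: "vector_space sK" and vsD: "vector_space sD"
    and l\<alpha>K: "Vector_Spaces.linear sK sK \<alpha>K" and l\<alpha>D: "Vector_Spaces.linear sD sD \<alpha>D"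
    and \<alpha>Kbr: "\<And>xs. length xs = n \<Longrightarrow> \<alpha>K (brK xs) = brK (map \<alpha>K xs)"
    and \<alpha>Dbr: "\<And>xs. length xs = n \<Longrightarrow> \<alpha>D (brD xs) = brD (map \<alpha>D xs)"
    and l\<pi>: "Vector_Spaces.linear sK sL \<pi>" and \<pi>br: "\<And>xs. length xs = n \<Longrightarrow> \<pi> (brK xs) = brL (map \<pi> xs)"
    and \<pi>\<alpha>: "\<And>x. \<pi> (\<alpha>K x) = \<alpha>L (\<pi> x)"
    and lp: "Vector_Spaces.linear sD sL p" and pbr: "\<And>xs. length xs = n \<Longrightarrow> p (brD xs) = brL (map p xs)"
    and p\<alpha>: "\<And>x. p (\<alpha>D x) = \<alpha>L (p x)"
    using cK cD by (auto simp: central_ext_def hom_leibniz_def hl_hom_def)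
  obtain t where lt: "Vector_Spaces.linear sK sD t" and lift: "\<And>x. p (t x) = \<pi> x"
    using central_ext_linear_lift[OF cK cD] by blast
  obtain h where lh: "Vector_Spaces.linear sK sD h"
    and h: "\<And>\<tau>. \<tau> \<in> free_vs n \<Longrightarrow> h (free_ext sK brK \<tau>) = free_ext sD (brD \<circ> map t) \<tau>"
    using free_ext_factor[OF vsK vsD HL0_zero_free_ext_onto[OF vsK perfect]
        HL1_zero_lift_bracket_vanishes[OF n H1 cK cD lt lift]] by blast
  have ph: "p (h y) = \<pi> y" for y
  proof -
    obtain \<tau> where \<tau>: "\<tau> \<in> free_vs n" and y: "y = free_ext sK brK \<tau>"
      using HL0_zero_free_ext_onto[OF vsK perfect] by metis
    have "p (h y) = free_ext sL (p \<circ> (brD \<circ> map t)) \<tau>"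
      using h[OF \<tau>] linear_free_ext[OF lp] by (simp add: y)
    also have "\<dots> = free_ext sL (\<pi> \<circ> brK) \<tau>"
      using \<tau> by (intro free_ext_cong) (simp add: free_vs_iff pbr \<pi>br lift o_def)
    also have "\<dots> = \<pi> y"
      unfolding y by (rule linear_free_ext[OF l\<pi>, symmetric])
    finally show ?thesis .
  qed
  have hbr: "h (brK xs) = brD (map h xs)" if xs: "length xs = n" for xs
  proof -
    have "h (brK xs) = brD (map t xs)"
      using h[OF free_vs_gen[OF xs]] by (simp add: free_ext_gen[OF vsK] free_ext_gen[OF vsD])
    also have "\<dots> = brD (map h xs)"
      by (rule central_ext_bracket_eq[OF cD]) (simp_all add: xs lift ph)
    finally show ?thesis .
  qed
  \<comment> \<open>both sides are bracket-preserving lifts of \<open>\<alpha>\<^sub>L \<circ> \<pi>\<close>\<close>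
  have "h \<circ> \<alpha>K = \<alpha>D \<circ> h"
  proof (rule bracket_maps_into_central_ext_eq[OF vsK perfect cD])
    show "Vector_Spaces.linear sK sD (h \<circ> \<alpha>K)" "Vector_Spaces.linear sK sD (\<alpha>D \<circ> h)"
      using Vector_Spaces.linear_compose[OF l\<alpha>K lh] Vector_Spaces.linear_compose[OF lh l\<alpha>D] .
    show "p \<circ> (h \<circ> \<alpha>K) = p \<circ> (\<alpha>D \<circ> h)"
      by (simp add: fun_eq_iff ph \<pi>\<alpha> p\<alpha>)
  qed (simp_all add: \<alpha>Kbr \<alpha>Dbr hbr)
  then show ?thesis
    using lh hbr ph by (auto simp: hl_hom_def fun_eq_iff)
qed

theorem theorem3p11:
  fixes sK :: "'k::field \<Rightarrow> 'b::ab_group_add \<Rightarrow> 'b" and brK :: "'b list \<Rightarrow> 'b" and \<alpha>K :: "'b \<Rightarrow> 'b"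
    and sL :: "'k \<Rightarrow> 'c::ab_group_add \<Rightarrow> 'c" and brL :: "'c list \<Rightarrow> 'c" and \<alpha>L :: "'c \<Rightarrow> 'c"
    and \<pi> :: "'b \<Rightarrow> 'c" and n :: nat
  assumes "n \<ge> 2"
    and "hom_leibniz sK n brK \<alpha>K"
    and "HL0_zero sK n brK"
    and "HL1_zero sK n brK \<alpha>K"
    and "central_ext sK brK \<alpha>K sL brL \<alpha>L n \<pi>"
  shows "univ_central_ext_wrt sK brK \<alpha>K sL brL \<alpha>L n \<pi> TYPE('d::ab_group_add)"
  unfolding univ_central_ext_wrt_def
proof (intro conjI allI impI)
  fix sD :: "'k \<Rightarrow> 'd \<Rightarrow> 'd" and brD \<alpha>D p
  assume cD: "central_ext sD brD \<alpha>D sL brL \<alpha>L n p"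
  obtain h where h: "hl_hom sK brK \<alpha>K sD brD \<alpha>D n h" "p \<circ> h = \<pi>"
    using central_ext_lift_exists[OF _ assms(3,4,5) cD] assms(1) by auto
  have vsK: "vector_space sK" using assms(2) by (simp add: hom_leibniz_def)
  show "\<exists>!h. hl_hom sK brK \<alpha>K sD brD \<alpha>D n h \<and> p \<circ> h = \<pi>"
  proof (rule ex1I)
    fix h' assume "hl_hom sK brK \<alpha>K sD brD \<alpha>D n h' \<and> p \<circ> h' = \<pi>"
    with h show "h' = h"
      by (intro bracket_maps_into_central_ext_eq[OF vsK assms(3) cD]) (auto simp: hl_hom_def)
  qed (use h in blast)
qed fact

end
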